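(* Let $n\ge 3$ and let $\Delta(D_{2n})$ be the commuting graph of the dihedral group $D_{2n}$. (i) If $n$ is odd, the Sombor spectrum of $\Delta(D_{2n})$ consists of $-(n-1)\sqrt2$ with multiplicity $n-2$, $0$ with multiplicity $n-1$, and the three roots (with multiplicity) of \[x^3+\sqrt2(3n-n^2-2)x^2+(15n^2-9n^3-10n+2)x+\sqrt2(4n^5-16n^4+22n^3-14n^2+4n).\] (ii) If $n$ is even, the Sombor spectrum of $\Delta(D_{2n})$ consists of $-(2n-1)\sqrt2$ with multiplicity $1$, $-(n-1)\sqrt2$ with multiplicity $n-3$, $-3\sqrt2$ with multiplicity $n/2$, and the roots (with multiplicity) of \[\big(x-(2n-1)\sqrt2\big)\big(x-(n-1)(n-3)\sqrt2\big)(x-3\sqrt2)^{n/2}-2(n-2)(5n^2-6n+2)(x-3\sqrt2)^{n/2}-4n(2n^2-2n+5)\big(x-(n-3)(n-1)\sqrt2\big)(x-3\sqrt2)^{n/2-1}.\]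
   Context: For a finite simple graph $\Gamma$ with vertices $u_1,\dots,u_N$, the Sombor matrix $S(\Gamma)$ has $(i,j)$ entry $\sqrt{\deg(u_i)^2+\deg(u_j)^2}$ if $u_i,u_j$ are adjacent and $0$ otherwise; the Sombor spectrum is the multiset of its eigenvalues. The dihedral group is $D_{2n}=\langle a,b: a^n=b^2=e,\ ba=a^{-1}b\rangle$ of order $2n$. The commuting graph $\Delta(G)$ of a group $G$ has vertex set $G$, two distinct vertices $x,y$ being adjacent iff $xy=yx$. *)

theory Defs
  imports "Jordan_Normal_Form.Char_Poly" "HOL-Algebra.Group"
begin

definition graph_degree :: "'a set \<Rightarrow> ('a \<Rightarrow> 'a \<Rightarrow> bool) \<Rightarrow> 'a \<Rightarrow> nat" where
  "graph_degree V E v = card {u \<in> V. E v u}"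

definition sombor_matrix :: "'a set \<Rightarrow> ('a \<Rightarrow> 'a \<Rightarrow> bool) \<Rightarrow> 'a list \<Rightarrow> real mat" where
  "sombor_matrix V E vs = mat (length vs) (length vs)
     (\<lambda>(i, j). if E (vs ! i) (vs ! j)
               then sqrt (real (graph_degree V E (vs ! i)) ^ 2 + real (graph_degree V E (vs ! j)) ^ 2)
               else 0)"

definition commuting_adj :: "('a, 'b) monoid_scheme \<Rightarrow> 'a \<Rightarrow> 'a \<Rightarrow> bool" where
  "commuting_adj G x y \<longleftrightarrow> x \<noteq> y \<and> x \<otimes>\<^bsub>G\<^esub> y = y \<otimes>\<^bsub>G\<^esub> x"

text \<open>Dihedral group D_{2n}: the element a^i b^s is represented by (i, s) with 0 \<le> i < n
  and s :: bool (s = True meaning a factor b).  Multiplication: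
  (a^i b^s)(a^j b^t) = a^(i + (-1)^s j) b^(s+t), using b a = a^(-1) b.\<close>

definition dihedral_mult :: "nat \<Rightarrow> int \<times> bool \<Rightarrow> int \<times> bool \<Rightarrow> int \<times> bool" where
  "dihedral_mult n x y =
     ((fst x + (if snd x then - fst y else fst y)) mod int n, snd x \<noteq> snd y)"

definition dihedral_group :: "nat \<Rightarrow> (int \<times> bool) monoid" where
  "dihedral_group n = \<lparr>carrier = {0..<int n} \<times> UNIV, mult = dihedral_mult n, one = (0, False)\<rparr>"

end

theory Submission
  imports Defs
begin

(* Adjacency in the commuting graph of D_2n depends only on a coarse class of each vertex:
   central rotations, non-central rotations, and reflections, the latter grouped into commuting
   pairs {a^i b, a^(i + n/2) b} when n is even and lumped together when n is odd. Hence degrees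
   and Sombor weights depend only on classes, and the Sombor matrix is S = P B P^T - diag (w o cls)
   with P the N x k class indicator matrix. Writing x I - S = D - P (B P^T) with D diagonal, the
   matrix determinant lemma gives
     char_poly S = prod_K (x + w_K)^(c_K - 1) * char_poly Q,   Q_KL = B_KL c_L - [K = L] w_K,
   where c_K are the class sizes. For odd n the quotient Q is 3 x 3; for even n it is again
   block-constant, since all reflection pairs look alike, and a second reduction leaves a 3 x 3
   matrix. *)

section \<open>Characteristic polynomials of block-constant matrices\<close>

lemma det_mat_diag: "det (mat_diag n f) = (\<Prod>i<n. f i)"
proof -
  have "det (mat_diag n f) = prod_list (diag_mat (mat_diag n f))"
    by (rule det_upper_triangular[of _ n]) (auto simp: upper_triangular_def mat_diag_def)
  also have "\<dots> = (\<Prod>i<n. f i)"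
    by (simp add: diag_mat_def mat_diag_def prod.list_conv_set_nth lessThan_atLeast0)
  finally show ?thesis .
qed

lemma matrix_determinant_lemma:
  fixes D :: "'a::idom mat"
  assumes D: "D \<in> carrier_mat N N" and D': "D' \<in> carrier_mat N N" and inv: "D' * D = 1\<^sub>m N"
    and U: "U \<in> carrier_mat N k" and V: "V \<in> carrier_mat k N"
  shows "det (D - U * V) = det D * det (1\<^sub>m k - V * D' * U)"
proof -
  \<comment> \<open>eliminate in the bordered matrix M once by columns and once by rows\<close>
  define M where "M = four_block_mat D U V (1\<^sub>m k)"
  define L1 where "L1 = four_block_mat (1\<^sub>m N) (0\<^sub>m N k) (- V) (1\<^sub>m k)"
  define L2 where "L2 = four_block_mat (1\<^sub>m N) (0\<^sub>m N k) (- (V * D')) (1\<^sub>m k)"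
  have M: "M \<in> carrier_mat (N + k) (N + k)" unfolding M_def using D U V by auto
  have "M * L1 = four_block_mat (D * 1\<^sub>m N + U * - V) (D * 0\<^sub>m N k + U * 1\<^sub>m k)
      (V * 1\<^sub>m N + 1\<^sub>m k * - V) (V * 0\<^sub>m N k + 1\<^sub>m k * 1\<^sub>m k)"
    unfolding M_def L1_def by (rule mult_four_block_mat) (use D U V in auto)
  also have "\<dots> = four_block_mat (D - U * V) U (0\<^sub>m k N) (1\<^sub>m k)"
    using D U V by (auto simp: minus_add_uminus_mat[symmetric])
  finally have ML1: "M * L1 = four_block_mat (D - U * V) U (0\<^sub>m k N) (1\<^sub>m k)" .
  have "L2 * M = four_block_mat (1\<^sub>m N * D + 0\<^sub>m N k * V) (1\<^sub>m N * U + 0\<^sub>m N k * 1\<^sub>m k)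
      (- (V * D') * D + 1\<^sub>m k * V) (- (V * D') * U + 1\<^sub>m k * 1\<^sub>m k)"
    unfolding M_def L2_def by (rule mult_four_block_mat) (use D U V D' in auto)
  also have "\<dots> = four_block_mat D U (0\<^sub>m k N) (1\<^sub>m k - V * D' * U)"
  proof -
    have "- (V * D') * D = - V" using V D' D inv by (simp add: assoc_mult_mat[OF V D' D])
    moreover have "- (V * D') * U + 1\<^sub>m k * 1\<^sub>m k = 1\<^sub>m k - V * D' * U"
      using V D' U by (subst minus_add_uminus_mat) (auto simp: comm_add_mat[of _ k k])
    ultimately show ?thesis using D U V D' by auto
  qed
  finally have L2M: "L2 * M = four_block_mat D U (0\<^sub>m k N) (1\<^sub>m k - V * D' * U)" .
  have det_L1: "det L1 = 1" and det_L2: "det L2 = 1"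
    unfolding L1_def L2_def using V D'
    by (subst det_four_block_mat_upper_right_zero[of _ N _ k]; auto)+
  have "det (D - U * V) = det (M * L1)"
    unfolding ML1 by (subst det_four_block_mat_lower_left_zero[of _ N _ k]) (use D U V in auto)
  also have "\<dots> = det (L2 * M)"
    using det_mult[OF M, of L1] det_mult[OF _ M, of L2] det_L1 det_L2
    unfolding L1_def L2_def using V D' by auto
  also have "\<dots> = det D * det (1\<^sub>m k - V * D' * U)"
    unfolding L2M by (subst det_four_block_mat_lower_left_zero[of _ N _ k]) (use D U V D' in auto)
  finally show ?thesis .
qed

definition quotient_matrix ::
    "nat \<Rightarrow> (nat \<Rightarrow> nat \<Rightarrow> 'a::comm_ring_1) \<Rightarrow> (nat \<Rightarrow> nat) \<Rightarrow> (nat \<Rightarrow> 'a) \<Rightarrow> 'a mat" where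
  "quotient_matrix k B c w = mat k k (\<lambda>(K, L). B K L * of_nat (c L) - (if K = L then w K else 0))"

lemma prod_lessThan_group_by_class:
  fixes cls :: "nat \<Rightarrow> nat"
  assumes cls: "\<And>i. i < N \<Longrightarrow> cls i < k"
    and size: "\<And>K. K < k \<Longrightarrow> card {i. i < N \<and> cls i = K} = c K"
  shows "(\<Prod>i<N. f (cls i)) = (\<Prod>K<k. f K ^ c K)"
proof -
  have "(\<Prod>i<N. f (cls i)) = (\<Prod>K<k. \<Prod>i\<in>{i \<in> {..<N}. cls i = K}. f (cls i))"
    by (rule prod.group[symmetric]) (use cls in auto)
  also have "\<dots> = (\<Prod>K<k. f K ^ c K)"
  proof (rule prod.cong[OF refl])
    fix K assume "K \<in> {..<k}"
    have "(\<Prod>i\<in>{i \<in> {..<N}. cls i = K}. f (cls i)) = (\<Prod>i\<in>{i. i < N \<and> cls i = K}. f K)"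
      by (rule prod.cong) auto
    then show "(\<Prod>i\<in>{i \<in> {..<N}. cls i = K}. f (cls i)) = f K ^ c K"
      using size \<open>K \<in> {..<k}\<close> by simp
  qed
  finally show ?thesis .
qed

definition class_indicator :: "nat \<Rightarrow> nat \<Rightarrow> (nat \<Rightarrow> nat) \<Rightarrow> 'a::comm_ring_1 mat" where
  "class_indicator N k cls = mat N k (\<lambda>(i, K). of_bool (cls i = K))"

lemma class_indicator_carrier [simp]: "class_indicator N k cls \<in> carrier_mat N k"
  by (simp add: class_indicator_def)

lemma class_indicator_mult:
  assumes cls: "\<And>i. i < N \<Longrightarrow> cls i < k"
  shows "class_indicator N k cls * mat k m (\<lambda>(K, j). A K j) = mat N m (\<lambda>(i, j). A (cls i) j)"
    (is "?P = ?R")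
proof (rule eq_matI)
  fix i j assume "i < dim_row ?R" and "j < dim_col ?R"
  then have i: "i < N" and j: "j < m"
    by auto
  have "{..<k} \<inter> {K. cls i = K} = {cls i}"
    using cls[OF i] by auto
  then show "?P $$ (i, j) = ?R $$ (i, j)"
    using i j by (simp add: class_indicator_def scalar_prod_def lessThan_atLeast0)
qed (simp_all add: class_indicator_def)

lemma mult_class_indicator:
  assumes size: "\<And>L. L < k \<Longrightarrow> card {i. i < N \<and> cls i = L} = c L"
  shows "mat k N (\<lambda>(K, j). A K (cls j)) * class_indicator N k cls =
    mat k k (\<lambda>(K, L). A K L * of_nat (c L))" (is "?P = ?R")
proof (rule eq_matI)
  fix K L assume "K < dim_row ?R" and "L < dim_col ?R"
  then have K: "K < k" and L: "L < k"
    by auto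
  have "{..<N} \<inter> {j. cls j = L} = {j. j < N \<and> cls j = L}"
    by auto
  then show "?P $$ (K, L) = ?R $$ (K, L)"
    using K L size[OF L] by (simp add: class_indicator_def scalar_prod_def lessThan_atLeast0)
qed (simp_all add: class_indicator_def)

lemma det_equitable_partition:
  fixes S :: "'a::field mat" and cls :: "nat \<Rightarrow> nat"
  assumes S: "S \<in> carrier_mat N N"
    and cls: "\<And>i. i < N \<Longrightarrow> cls i < k"
    and size: "\<And>K. K < k \<Longrightarrow> card {i. i < N \<and> cls i = K} = c K"
    and pos: "\<And>K. K < k \<Longrightarrow> c K > 0"
    and S_entries: "\<And>i j. i < N \<Longrightarrow> j < N \<Longrightarrow>
      S $$ (i, j) = B (cls i) (cls j) - (if i = j then w (cls i) else 0)"
    and x: "\<And>K. K < k \<Longrightarrow> x + w K \<noteq> 0"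
  shows "det (x \<cdot>\<^sub>m 1\<^sub>m N - S) =
    (\<Prod>K<k. (x + w K) ^ (c K - 1)) * det (x \<cdot>\<^sub>m 1\<^sub>m k - quotient_matrix k B c w)"
proof -
  define D where "D = mat_diag N (\<lambda>i. x + w (cls i))"
  define D' where "D' = mat_diag N (\<lambda>i. inverse (x + w (cls i)))"
  define U where "U = (class_indicator N k cls :: 'a mat)"
  define V where "V = mat k N (\<lambda>(K, j). B K (cls j))"
  define E where "E = mat_diag k (\<lambda>K. x + w K)"
  have D: "D \<in> carrier_mat N N" and D': "D' \<in> carrier_mat N N" and U: "U \<in> carrier_mat N k"
    and V: "V \<in> carrier_mat k N" and E: "E \<in> carrier_mat k k"
    by (simp_all add: D_def D'_def U_def V_def E_def)
  have inv: "D' * D = 1\<^sub>m N"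
    unfolding D_def D'_def mat_diag_diag by (rule eq_matI) (auto simp: mat_diag_def cls x)
  have "U * V = mat N N (\<lambda>(i, j). B (cls i) (cls j))"
    unfolding U_def V_def by (rule class_indicator_mult[OF cls])
  then have split: "x \<cdot>\<^sub>m 1\<^sub>m N - S = D - U * V"
    using S by (auto intro!: eq_matI simp: S_entries D_def mat_diag_def)
  have "V * D' = mat k N (\<lambda>(K, j). B K (cls j) * inverse (x + w (cls j)))"
    unfolding D'_def by (subst mat_diag_mult_right[OF V]) (auto simp: V_def)
  then have "V * D' * U = mat k k (\<lambda>(K, L). B K L * inverse (x + w L) * of_nat (c L))"
    unfolding U_def by (simp add: mult_class_indicator[where A = "\<lambda>K L. B K L * inverse (x + w L)", OF size])
  also have "\<dots> = mat k k (\<lambda>(K, L). B K L * of_nat (c L) * inverse (x + w L))"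
    by (simp add: mult_ac)
  finally have VD'U: "V * D' * U = mat k k (\<lambda>(K, L). B K L * of_nat (c L) * inverse (x + w L))" .
  have "(1\<^sub>m k - V * D' * U) * E = x \<cdot>\<^sub>m 1\<^sub>m k - quotient_matrix k B c w"
    unfolding E_def VD'U
    by (subst mat_diag_mult_right[of _ k])
      (auto intro!: eq_matI simp: quotient_matrix_def left_diff_distrib x mult.assoc[symmetric])
  moreover have "det (1\<^sub>m k - V * D' * U) * det E = det ((1\<^sub>m k - V * D' * U) * E)"
    by (rule det_mult[symmetric]) (use V D' U E in auto)
  ultimately have det_quotient:
    "det (1\<^sub>m k - V * D' * U) * det E = det (x \<cdot>\<^sub>m 1\<^sub>m k - quotient_matrix k B c w)"
    by (simp only:)
  have "det D = (\<Prod>K<k. (x + w K) ^ c K)"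
    unfolding D_def det_mat_diag by (rule prod_lessThan_group_by_class[OF cls size])
  also have "\<dots> = (\<Prod>K<k. (x + w K) ^ (c K - 1) * (x + w K))"
    by (rule prod.cong[OF refl], rule power_minus_mult[symmetric]) (simp add: pos)
  also have "\<dots> = (\<Prod>K<k. (x + w K) ^ (c K - 1)) * det E"
    unfolding E_def det_mat_diag prod.distrib ..
  finally have det_D: "det D = (\<Prod>K<k. (x + w K) ^ (c K - 1)) * det E" .
  have "det (x \<cdot>\<^sub>m 1\<^sub>m N - S) = det D * det (1\<^sub>m k - V * D' * U)"
    unfolding split by (rule matrix_determinant_lemma[OF D D' inv U V])
  also have "\<dots> = (\<Prod>K<k. (x + w K) ^ (c K - 1)) * (det (1\<^sub>m k - V * D' * U) * det E)"
    unfolding det_D by (simp only: mult_ac)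
  finally show ?thesis unfolding det_quotient .
qed

lemma poly_char_poly:
  fixes A :: "'a::field mat"
  assumes A: "A \<in> carrier_mat n n"
  shows "poly (char_poly A) x = det (x \<cdot>\<^sub>m 1\<^sub>m n - A)"
proof -
  have "- char_matrix A x = x \<cdot>\<^sub>m 1\<^sub>m n - A"
    by (rule eq_matI) (use A in \<open>auto simp: char_matrix_def\<close>)
  then show ?thesis using char_poly_matrix[OF A] by simp
qed

lemma poly_eqI_cofinite:
  fixes p q :: "'a::{idom,ring_char_0} poly"
  assumes F: "finite F" and eq: "\<And>x. x \<notin> F \<Longrightarrow> poly p x = poly q x"
  shows "p = q"
proof (rule ccontr)
  assume "p \<noteq> q"
  then have "finite {x. poly (p - q) x = 0}"
    by (intro poly_roots_finite) simp
  moreover have "- F \<subseteq> {x. poly (p - q) x = 0}"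
    using eq by auto
  ultimately have "finite (F \<union> - F)"
    using F finite_subset by blast
  then show False
    using infinite_UNIV_char_0[where 'a = 'a] by simp
qed

lemma char_poly_equitable_partition:
  fixes S :: "'a::field_char_0 mat" and cls :: "nat \<Rightarrow> nat"
  assumes S: "S \<in> carrier_mat N N"
    and cls: "\<And>i. i < N \<Longrightarrow> cls i < k"
    and size: "\<And>K. K < k \<Longrightarrow> card {i. i < N \<and> cls i = K} = c K"
    and pos: "\<And>K. K < k \<Longrightarrow> c K > 0"
    and S_entries: "\<And>i j. i < N \<Longrightarrow> j < N \<Longrightarrow>
      S $$ (i, j) = B (cls i) (cls j) - (if i = j then w (cls i) else 0)"
  shows "char_poly S = (\<Prod>K<k. [: w K, 1 :] ^ (c K - 1)) * char_poly (quotient_matrix k B c w)"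
proof (rule poly_eqI_cofinite[of "(\<lambda>K. - w K) ` {..<k}"])
  fix x assume "x \<notin> (\<lambda>K. - w K) ` {..<k}"
  then have "\<And>K. K < k \<Longrightarrow> x + w K \<noteq> 0"
    by (force simp: add_eq_0_iff)
  from det_equitable_partition[OF S cls size pos S_entries this]
  show "poly (char_poly S) x =
      poly ((\<Prod>K<k. [: w K, 1 :] ^ (c K - 1)) * char_poly (quotient_matrix k B c w)) x"
    by (simp add: poly_char_poly[OF S] poly_char_poly[of _ k] poly_prod quotient_matrix_def add.commute)
qed simp

lemma det_mat2:
  fixes A :: "'a::comm_ring_1 mat"
  assumes A: "A \<in> carrier_mat 2 2"
  shows "det A = A $$ (0, 0) * A $$ (1, 1) - A $$ (0, 1) * A $$ (1, 0)"
proof -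
  have "det A = (\<Sum>j<2. A $$ (0, j) * cofactor A 0 j)"
    by (rule laplace_expansion_row[OF A]) simp
  also have "\<dots> = A $$ (0, 0) * cofactor A 0 0 + A $$ (0, 1) * cofactor A 0 1"
    by (simp add: numeral_2_eq_2)
  finally have "det A = A $$ (0, 0) * cofactor A 0 0 + A $$ (0, 1) * cofactor A 0 1" .
  moreover have "cofactor A 0 0 = A $$ (1, 1)" and "cofactor A 0 1 = - A $$ (1, 0)"
    unfolding cofactor_def using A
    by (subst det_single; auto simp: mat_delete_def insert_index_def numeral_2_eq_2)+
  ultimately show ?thesis by simp
qed

lemma det_mat3:
  fixes A :: "'a::comm_ring_1 mat"
  assumes A: "A \<in> carrier_mat 3 3"
  shows "det A = A $$ (0, 0) * (A $$ (1, 1) * A $$ (2, 2) - A $$ (1, 2) * A $$ (2, 1))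
    - A $$ (0, 1) * (A $$ (1, 0) * A $$ (2, 2) - A $$ (1, 2) * A $$ (2, 0))
    + A $$ (0, 2) * (A $$ (1, 0) * A $$ (2, 1) - A $$ (1, 1) * A $$ (2, 0))"
proof -
  have "det A = (\<Sum>j<3. A $$ (0, j) * cofactor A 0 j)"
    by (rule laplace_expansion_row[OF A]) simp
  also have "\<dots> = A $$ (0, 0) * cofactor A 0 0 + A $$ (0, 1) * cofactor A 0 1
      + A $$ (0, 2) * cofactor A 0 2"
    by (simp add: numeral_3_eq_3 numeral_2_eq_2)
  finally have "det A = A $$ (0, 0) * cofactor A 0 0 + A $$ (0, 1) * cofactor A 0 1
      + A $$ (0, 2) * cofactor A 0 2" .
  moreover have "cofactor A 0 0 = A $$ (1, 1) * A $$ (2, 2) - A $$ (1, 2) * A $$ (2, 1)"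
    and "cofactor A 0 1 = - (A $$ (1, 0) * A $$ (2, 2) - A $$ (1, 2) * A $$ (2, 0))"
    and "cofactor A 0 2 = A $$ (1, 0) * A $$ (2, 1) - A $$ (1, 1) * A $$ (2, 0)"
    unfolding cofactor_def using A
    by (subst det_mat2; auto simp: mat_delete_def insert_index_def numeral_2_eq_2)+
  ultimately show ?thesis by (simp only:) (simp add: algebra_simps)
qed

lemma char_poly_mat3:
  fixes g :: "nat \<Rightarrow> nat \<Rightarrow> 'a::field_char_0"
  shows "char_poly (mat 3 3 (\<lambda>(i, j). g i j)) =
    [: - (g 0 0 * (g 1 1 * g 2 2 - g 1 2 * g 2 1) - g 0 1 * (g 1 0 * g 2 2 - g 1 2 * g 2 0)
          + g 0 2 * (g 1 0 * g 2 1 - g 1 1 * g 2 0)),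
       g 0 0 * g 1 1 - g 0 1 * g 1 0 + g 0 0 * g 2 2 - g 0 2 * g 2 0 + g 1 1 * g 2 2 - g 1 2 * g 2 1,
       - (g 0 0 + g 1 1 + g 2 2), 1 :]"
proof (rule poly_eqI_cofinite[of "{}"])
  fix x :: 'a
  have A: "mat 3 3 (\<lambda>(i, j). g i j) \<in> carrier_mat 3 3"
    by simp
  show "poly (char_poly (mat 3 3 (\<lambda>(i, j). g i j))) x = poly [: - (g 0 0 * (g 1 1 * g 2 2 - g 1 2 * g 2 1)
      - g 0 1 * (g 1 0 * g 2 2 - g 1 2 * g 2 0) + g 0 2 * (g 1 0 * g 2 1 - g 1 1 * g 2 0)),
      g 0 0 * g 1 1 - g 0 1 * g 1 0 + g 0 0 * g 2 2 - g 0 2 * g 2 0 + g 1 1 * g 2 2 - g 1 2 * g 2 1,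
      - (g 0 0 + g 1 1 + g 2 2), 1 :] x"
    unfolding poly_char_poly[OF A] by (subst det_mat3) (auto simp: algebra_simps)
qed simp

section \<open>Sombor matrices of graphs with class-determined adjacency\<close>

definition sombor_weight :: "(nat \<Rightarrow> nat \<Rightarrow> bool) \<Rightarrow> (nat \<Rightarrow> nat) \<Rightarrow> nat \<Rightarrow> nat \<Rightarrow> real" where
  "sombor_weight R d K L = (if R K L then sqrt (real (d K) ^ 2 + real (d L) ^ 2) else 0)"

lemma card_filter_nth_distinct:
  assumes "distinct vs"
  shows "card {i. i < length vs \<and> P (vs ! i)} = card {v \<in> set vs. P v}"
proof -
  have "{v \<in> set vs. P v} = (\<lambda>i. vs ! i) ` {i. i < length vs \<and> P (vs ! i)}"
    by (auto simp: in_set_conv_nth)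
  moreover have "inj_on (\<lambda>i. vs ! i) {i. i < length vs \<and> P (vs ! i)}"
    using assms by (auto intro!: inj_onI simp: nth_eq_iff_index_eq)
  ultimately show ?thesis by (simp add: card_image)
qed

lemma graph_degree_eq_card_Diff:
  assumes "finite V" and "u \<in> V" and "\<And>v. v \<in> V \<Longrightarrow> E u v \<longleftrightarrow> v \<noteq> u \<and> P v"
  shows "graph_degree V E u = card {v \<in> V. P v} - (if P u then 1 else 0)"
proof -
  have "{v \<in> V. E u v} = {v \<in> V. P v} - {u}"
    using assms(3) by auto
  then show ?thesis
    using assms(1,2) by (simp add: graph_degree_def card_Diff_singleton_if)
qed

lemma char_poly_sombor_matrix_equitable:
  fixes cls :: "'a \<Rightarrow> nat"
  assumes vs: "distinct vs" "set vs = V"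
    and cls: "\<And>u. u \<in> V \<Longrightarrow> cls u < k"
    and size: "\<And>K. K < k \<Longrightarrow> card {u \<in> V. cls u = K} = c K"
    and pos: "\<And>K. K < k \<Longrightarrow> c K > 0"
    and adj: "\<And>u v. u \<in> V \<Longrightarrow> v \<in> V \<Longrightarrow> E u v \<longleftrightarrow> u \<noteq> v \<and> R (cls u) (cls v)"
    and deg: "\<And>u. u \<in> V \<Longrightarrow> graph_degree V E u = d (cls u)"
  shows "char_poly (sombor_matrix V E vs) =
    (\<Prod>K<k. [: sombor_weight R d K K, 1 :] ^ (c K - 1)) *
    char_poly (quotient_matrix k (sombor_weight R d) c (\<lambda>K. sombor_weight R d K K))"
proof (rule char_poly_equitable_partition[where cls = "\<lambda>i. cls (vs ! i)"])
  have nth: "i < length vs \<Longrightarrow> vs ! i \<in> V" for i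
    using vs(2) by auto
  show "sombor_matrix V E vs \<in> carrier_mat (length vs) (length vs)"
    by (simp add: sombor_matrix_def)
  show "\<And>i. i < length vs \<Longrightarrow> cls (vs ! i) < k"
    using cls nth by blast
  show "card {i. i < length vs \<and> cls (vs ! i) = K} = c K" if "K < k" for K
    using card_filter_nth_distinct[OF vs(1), of "\<lambda>v. cls v = K"] size[OF that] vs(2) by simp
  show "\<And>K. K < k \<Longrightarrow> c K > 0"
    by (rule pos)
  fix i j assume i: "i < length vs" and j: "j < length vs"
  have "vs ! i = vs ! j \<longleftrightarrow> i = j"
    using vs(1) i j by (simp add: nth_eq_iff_index_eq)
  then show "sombor_matrix V E vs $$ (i, j) = sombor_weight R d (cls (vs ! i)) (cls (vs ! j))
      - (if i = j then sombor_weight R d (cls (vs ! i)) (cls (vs ! i)) else 0)"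
    using i j adj[OF nth[OF i] nth[OF j]] deg[OF nth[OF i]] deg[OF nth[OF j]]
    by (auto simp: sombor_matrix_def sombor_weight_def)
qed

section \<open>The commuting graph of the dihedral group\<close>

lemma int_dvd_double_iff:
  fixes i m :: int
  assumes "0 \<le> i" and "i < m"
  shows "m dvd 2 * i \<longleftrightarrow> i = 0 \<or> 2 * i = m"
proof
  assume "m dvd 2 * i"
  then obtain k where k: "2 * i = m * k" ..
  have "0 \<le> m * k" and "0 < m"
    using k assms by linarith+
  then have "0 \<le> k"
    by (simp add: zero_le_mult_iff)
  moreover have "m * k < m * 2"
    using k assms by linarith
  then have "k < 2"
    using assms by (simp add: mult_less_cancel_left_pos)
  ultimately have "k = 0 \<or> k = 1"
    by auto
  then show "i = 0 \<or> 2 * i = m"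
    using k by auto
qed auto

lemma nat_mod_eq_iff_double_range:
  fixes a h :: int
  assumes "0 \<le> a" and "a < 2 * h" and "int p < h"
  shows "nat (a mod h) = p \<longleftrightarrow> a = int p \<or> a = int p + h"
proof (cases "a < h")
  case False
  then have "(a - h) mod h = a - h"
    using assms by (intro mod_pos_pos_trivial) auto
  then have "a mod h = a - h"
    by simp
  then show ?thesis
    using False assms by auto
qed (use assms in auto)

lemma carrier_dihedral_group: "carrier (dihedral_group n) = {0..<int n} \<times> UNIV"
  by (simp add: dihedral_group_def)

lemma commuting_adj_dihedral_group:
  "commuting_adj (dihedral_group n) (i, s) (j, t) \<longleftrightarrow> (i, s) \<noteq> (j, t) \<and>
    (if s then (if t then int n dvd 2 * (i - j) else int n dvd 2 * j) else (t \<longrightarrow> int n dvd 2 * i))"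
  by (cases s; cases t)
    (auto simp: commuting_adj_def dihedral_group_def dihedral_mult_def mod_eq_dvd_iff algebra_simps)

lemma dihedral_reflections_commute_iff:
  assumes "0 \<le> i" "i < int n" "0 \<le> j" "j < int n"
  shows "i \<noteq> j \<and> int n dvd 2 * (i - j) \<longleftrightarrow>
    i \<noteq> j \<and> even n \<and> i mod (int n div 2) = j mod (int n div 2)"
proof (cases "even n")
  case True
  then obtain h where h: "int n = 2 * h"
    by (metis evenE of_nat_mult of_nat_numeral)
  have "int n dvd 2 * (i - j) \<longleftrightarrow> h dvd i - j"
    unfolding h by (metis dvd_times_left_cancel_iff zero_neq_numeral)
  then show ?thesis
    using True h by (simp add: mod_eq_dvd_iff)
next
  case False
  have "coprime (int n) 2"
    using False by (simp add: coprime_commute)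
  then have "int n dvd 2 * (i - j) \<longleftrightarrow> int n dvd i - j"
    by (rule coprime_dvd_mult_right_iff)
  then have "int n dvd 2 * (i - j) \<longleftrightarrow> i mod int n = j mod int n"
    by (simp add: mod_eq_dvd_iff)
  then show ?thesis
    using False assms by simp
qed

(* Class 0: the central rotations a^i (n divides 2 i); class 1: the other rotations; classes 2 + p:
   for even n the reflections a^i b with i mod (n/2) = p, which form commuting pairs; for odd n all
   reflections are in class 2. *)
definition dihedral_class :: "nat \<Rightarrow> int \<times> bool \<Rightarrow> nat" where
  "dihedral_class n u =
    (if snd u then 2 + (if even n then nat (fst u mod (int n div 2)) else 0)
     else if int n dvd 2 * fst u then 0 else 1)"

definition dihedral_num_classes :: "nat \<Rightarrow> nat" where
  "dihedral_num_classes n = (if even n then n div 2 + 2 else 3)"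

definition dihedral_class_adj :: "nat \<Rightarrow> nat \<Rightarrow> nat \<Rightarrow> bool" where
  "dihedral_class_adj n K L \<longleftrightarrow> K = 0 \<or> L = 0 \<or> K = 1 \<and> L = 1 \<or> even n \<and> 2 \<le> K \<and> K = L"

definition dihedral_class_size :: "nat \<Rightarrow> nat \<Rightarrow> nat" where
  "dihedral_class_size n K =
    (if K = 0 then (if even n then 2 else 1)
     else if K = 1 then (if even n then n - 2 else n - 1)
     else if even n then 2 else n)"

definition dihedral_class_degree :: "nat \<Rightarrow> nat \<Rightarrow> nat" where
  "dihedral_class_degree n K =
    (if K = 0 then 2 * n - 1 else if K = 1 then n - 1 else if even n then 3 else 1)"

lemma dihedral_class_less:
  assumes "u \<in> carrier (dihedral_group n)"
  shows "dihedral_class n u < dihedral_num_classes n"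
proof -
  have "0 \<le> fst u" "fst u < int n"
    using assms by (auto simp: carrier_dihedral_group)
  then have "even n \<Longrightarrow> 0 \<le> fst u mod (int n div 2) \<and> fst u mod (int n div 2) < int n div 2"
    by (intro conjI pos_mod_sign pos_mod_bound; presburger)
  then show ?thesis
    by (auto simp: dihedral_class_def dihedral_num_classes_def nat_less_iff)
qed

lemma commuting_adj_dihedral_class:
  assumes u: "u \<in> carrier (dihedral_group n)" and v: "v \<in> carrier (dihedral_group n)"
  shows "commuting_adj (dihedral_group n) u v \<longleftrightarrow>
    u \<noteq> v \<and> dihedral_class_adj n (dihedral_class n u) (dihedral_class n v)"
proof -
  obtain i s j t where uv: "u = (i, s)" "v = (j, t)"
    by (cases u, cases v)
  have ij: "0 \<le> i" "i < int n" "0 \<le> j" "j < int n"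
    using u v uv by (auto simp: carrier_dihedral_group)
  have "even n \<Longrightarrow> 0 \<le> k mod (int n div 2)" for k
    using ij by (intro pos_mod_sign) presburger
  then have "s \<Longrightarrow> t \<Longrightarrow> dihedral_class n u = dihedral_class n v \<longleftrightarrow>
      (even n \<longrightarrow> i mod (int n div 2) = j mod (int n div 2))"
    using uv by (auto simp: dihedral_class_def eq_nat_nat_iff)
  then show ?thesis
    using uv dihedral_reflections_commute_iff[OF ij]
    by (cases s; cases t)
      (auto simp: commuting_adj_dihedral_group dihedral_class_def dihedral_class_adj_def)
qed

lemma card_dihedral_class_odd:
  assumes "odd n" and "K < 3"
  shows "card {u \<in> carrier (dihedral_group n). dihedral_class n u = K} = dihedral_class_size n K"
proof -
  have "2 * i \<noteq> int n" for i
    using assms(1) by presburger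
  then have centre: "0 \<le> i \<Longrightarrow> i < int n \<Longrightarrow> int n dvd 2 * i \<longleftrightarrow> i = 0" for i
    using int_dvd_double_iff[of i "int n"] by simp
  consider "K = 0" | "K = 1" | "K = 2"
    using assms(2) by linarith
  then show ?thesis
  proof cases
    case 1
    then have "{u \<in> carrier (dihedral_group n). dihedral_class n u = K} = {(0, False)}"
      using assms(1) centre by (auto simp: carrier_dihedral_group dihedral_class_def odd_pos)
    then show ?thesis
      using 1 assms(1) by (simp add: dihedral_class_size_def)
  next
    case 2
    then have "{u \<in> carrier (dihedral_group n). dihedral_class n u = K} = {0<..<int n} \<times> {False}"
      using assms(1) centre by (auto simp: carrier_dihedral_group dihedral_class_def)
    then show ?thesis
      using 2 assms(1) by (simp add: dihedral_class_size_def card_cartesian_product)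
  next
    case 3
    then have "{u \<in> carrier (dihedral_group n). dihedral_class n u = K} = {0..<int n} \<times> {True}"
      using assms(1) by (auto simp: carrier_dihedral_group dihedral_class_def)
    then show ?thesis
      using 3 assms(1) by (simp add: dihedral_class_size_def card_cartesian_product)
  qed
qed

lemma card_dihedral_class_even:
  assumes "even n" and "n \<ge> 3" and "K < n div 2 + 2"
  shows "card {u \<in> carrier (dihedral_group n). dihedral_class n u = K} = dihedral_class_size n K"
proof -
  define h where "h = int (n div 2)"
  have n: "int n = 2 * h" and h: "h \<ge> 2" and h_div: "int n div 2 = h"
    using assms(1,2) unfolding h_def by presburger+
  have centre: "0 \<le> i \<Longrightarrow> i < int n \<Longrightarrow> int n dvd 2 * i \<longleftrightarrow> i = 0 \<or> i = h" for i
    using int_dvd_double_iff[of i "int n"] n by auto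
  have "K = 0 \<or> K = 1 \<or> K = (K - 2) + 2 \<and> K - 2 < n div 2"
    using assms(3) by auto
  then consider "K = 0" | "K = 1" | p where "K = p + 2" "int p < h"
    unfolding h_def by fastforce
  then show ?thesis
  proof cases
    case 1
    then have "{u \<in> carrier (dihedral_group n). dihedral_class n u = K} = {(0, False), (h, False)}"
      using centre h n by (auto simp: carrier_dihedral_group dihedral_class_def)
    then show ?thesis
      using 1 assms(1) h by (simp add: dihedral_class_size_def)
  next
    case 2
    then have "{u \<in> carrier (dihedral_group n). dihedral_class n u = K} = ({0..<int n} - {0, h}) \<times> {False}"
      using centre by (auto simp: carrier_dihedral_group dihedral_class_def)
    moreover have "card ({0..<int n} - {0, h}) = n - 2"
      using h n by (subst card_Diff_subset) auto
    ultimately show ?thesis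
      using 2 assms(1) by (simp add: dihedral_class_size_def card_cartesian_product)
  next
    case 3
    have "dihedral_class n (a, b) = K \<longleftrightarrow> b \<and> nat (a mod h) = p" for a b
      using 3 assms(1) by (simp add: dihedral_class_def h_div)
    then have "dihedral_class n (a, b) = K \<longleftrightarrow> b \<and> (a = int p \<or> a = int p + h)"
      if "0 \<le> a" "a < int n" for a b
      using nat_mod_eq_iff_double_range[of a h p] that n 3 by simp
    then have "{u \<in> carrier (dihedral_group n). dihedral_class n u = K} = {(int p, True), (int p + h, True)}"
      using n h 3 by (auto simp: carrier_dihedral_group)
    then show ?thesis
      using 3 assms(1) h by (simp add: dihedral_class_size_def)
  qed
qed

lemma card_dihedral_class:
  assumes "n \<ge> 3" and "K < dihedral_num_classes n"
  shows "card {u \<in> carrier (dihedral_group n). dihedral_class n u = K} = dihedral_class_size n K"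
  using assms card_dihedral_class_odd card_dihedral_class_even
  by (cases "even n") (auto simp: dihedral_num_classes_def)

lemma card_dihedral_class_adj:
  assumes n: "n \<ge> 3" and K: "K < dihedral_num_classes n"
  shows "card {v \<in> carrier (dihedral_group n). dihedral_class_adj n K (dihedral_class n v)} =
    (if K = 0 then 2 * n else if K = 1 then n else if even n then 4 else 1)"
proof -
  let ?V = "carrier (dihedral_group n)"
  let ?class = "\<lambda>L. {v \<in> ?V. dihedral_class n v = L}"
  consider "K = 0" | "K = 1" | "2 \<le> K" "even n" | "2 \<le> K" "odd n"
    by linarith
  then show ?thesis
  proof cases
    case 1
    then have "{v \<in> ?V. dihedral_class_adj n K (dihedral_class n v)} = ?V"
      by (auto simp: dihedral_class_adj_def)
    then show ?thesis
      using 1 by (simp add: carrier_dihedral_group card_cartesian_product)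
  next
    case 2
    then have "{v \<in> ?V. dihedral_class_adj n K (dihedral_class n v)} = {0..<int n} \<times> {False}"
      by (auto simp: carrier_dihedral_group dihedral_class_adj_def dihedral_class_def)
    then show ?thesis
      using 2 by (simp add: card_cartesian_product)
  next
    case 3
    then have "{v \<in> ?V. dihedral_class_adj n K (dihedral_class n v)} = ?class 0 \<union> ?class K"
      by (auto simp: dihedral_class_adj_def)
    moreover have "finite ?V"
      by (simp add: carrier_dihedral_group)
    then have "card (?class 0 \<union> ?class K) = 4"
      using 3 n K by (subst card_Un_disjoint) (auto simp: card_dihedral_class dihedral_class_size_def)
    ultimately show ?thesis
      using 3 by simp
  next
    case 4
    then have "{v \<in> ?V. dihedral_class_adj n K (dihedral_class n v)} = ?class 0"
      by (auto simp: dihedral_class_adj_def)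
    then show ?thesis
      using 4 n by (simp add: card_dihedral_class dihedral_class_size_def dihedral_num_classes_def)
  qed
qed

lemma graph_degree_dihedral_group:
  assumes n: "n \<ge> 3" and u: "u \<in> carrier (dihedral_group n)"
  shows "graph_degree (carrier (dihedral_group n)) (commuting_adj (dihedral_group n)) u =
    dihedral_class_degree n (dihedral_class n u)"
proof -
  let ?K = "dihedral_class n u"
  have "graph_degree (carrier (dihedral_group n)) (commuting_adj (dihedral_group n)) u =
      card {v \<in> carrier (dihedral_group n). dihedral_class_adj n ?K (dihedral_class n v)}
      - (if dihedral_class_adj n ?K ?K then 1 else 0)"
    using u commuting_adj_dihedral_class[OF u]
    by (intro graph_degree_eq_card_Diff) (auto simp: carrier_dihedral_group)
  then show ?thesis
    using card_dihedral_class_adj[OF n dihedral_class_less[OF u]]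
    by (simp add: dihedral_class_degree_def dihedral_class_adj_def)
qed

section \<open>The Sombor spectrum of the commuting graph\<close>

abbreviation dihedral_weight :: "nat \<Rightarrow> nat \<Rightarrow> nat \<Rightarrow> real" where
  "dihedral_weight n \<equiv> sombor_weight (dihedral_class_adj n) (dihedral_class_degree n)"

lemma char_poly_sombor_matrix_dihedral_group:
  assumes n: "n \<ge> 3" and vs: "distinct vs" "set vs = carrier (dihedral_group n)"
  shows "char_poly (sombor_matrix (carrier (dihedral_group n)) (commuting_adj (dihedral_group n)) vs) =
    (\<Prod>K<dihedral_num_classes n. [: dihedral_weight n K K, 1 :] ^ (dihedral_class_size n K - 1)) *
    char_poly (quotient_matrix (dihedral_num_classes n) (dihedral_weight n) (dihedral_class_size n)
      (\<lambda>K. dihedral_weight n K K))"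
proof (rule char_poly_sombor_matrix_equitable[OF vs])
  show "\<And>K. K < dihedral_num_classes n \<Longrightarrow> dihedral_class_size n K > 0"
    using n by (auto simp: dihedral_class_size_def)
qed (use n dihedral_class_less card_dihedral_class commuting_adj_dihedral_class
    graph_degree_dihedral_group in auto)

lemma sqrt_two_mult_square: "x \<ge> 0 \<Longrightarrow> sqrt (2 * x ^ 2) = x * sqrt 2"
  by (simp add: real_sqrt_mult mult.commute)

lemma dihedral_weight_rotations:
  assumes "n \<ge> 3"
  shows "dihedral_weight n 0 0 = (2 * real n - 1) * sqrt 2"
    and "dihedral_weight n 1 1 = (real n - 1) * sqrt 2"
    and "dihedral_weight n 0 1 = sqrt ((2 * real n - 1) ^ 2 + (real n - 1) ^ 2)"
    and "dihedral_weight n 1 0 = sqrt ((2 * real n - 1) ^ 2 + (real n - 1) ^ 2)"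
proof -
  have "0 \<le> 2 * real n - 1" and "0 \<le> real n - 1"
    using assms by simp_all
  then show "dihedral_weight n 0 0 = (2 * real n - 1) * sqrt 2"
    and "dihedral_weight n 1 1 = (real n - 1) * sqrt 2"
    and "dihedral_weight n 0 1 = sqrt ((2 * real n - 1) ^ 2 + (real n - 1) ^ 2)"
    and "dihedral_weight n 1 0 = sqrt ((2 * real n - 1) ^ 2 + (real n - 1) ^ 2)"
    using assms by (auto simp: sombor_weight_def dihedral_class_adj_def dihedral_class_degree_def
        of_nat_diff sqrt_two_mult_square add.commute)
qed

lemma dihedral_weight_reflections:
  assumes "n \<ge> 3" and "2 \<le> K"
  shows "dihedral_weight n 0 K = sqrt ((2 * real n - 1) ^ 2 + (if even n then 9 else 1))"
    and "dihedral_weight n K 0 = sqrt ((2 * real n - 1) ^ 2 + (if even n then 9 else 1))"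
    and "dihedral_weight n 1 K = 0" and "dihedral_weight n K 1 = 0"
    and "2 \<le> L \<Longrightarrow> dihedral_weight n K L = (if even n \<and> K = L then 3 * sqrt 2 else 0)"
proof -
  have "sqrt 18 = 3 * sqrt 2"
    using sqrt_two_mult_square[of 3] by simp
  then show "dihedral_weight n 0 K = sqrt ((2 * real n - 1) ^ 2 + (if even n then 9 else 1))"
    and "dihedral_weight n K 0 = sqrt ((2 * real n - 1) ^ 2 + (if even n then 9 else 1))"
    and "dihedral_weight n 1 K = 0" and "dihedral_weight n K 1 = 0"
    and "2 \<le> L \<Longrightarrow> dihedral_weight n K L = (if even n \<and> K = L then 3 * sqrt 2 else 0)"
    using assms by (auto simp: sombor_weight_def dihedral_class_adj_def dihedral_class_degree_def
        of_nat_diff add.commute)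
qed

lemma dihedral_sombor_prefactor_odd:
  assumes "odd n" and "n \<ge> 3"
  shows "(\<Prod>K<dihedral_num_classes n. [: dihedral_weight n K K, 1 :] ^ (dihedral_class_size n K - 1)) =
    [: (real n - 1) * sqrt 2, 1 :] ^ (n - 2) * [: 0, 1 :] ^ (n - 1)"
proof -
  have "{..<3} = {0, 1, 2 :: nat}"
    by auto
  then show ?thesis
    using assms dihedral_weight_rotations[OF assms(2)] dihedral_weight_reflections[OF assms(2) order_refl]
    by (simp add: dihedral_num_classes_def dihedral_class_size_def numeral_2_eq_2)
qed

lemma char_poly_dihedral_quotient_odd:
  assumes "odd n" and "n \<ge> 3"
  shows "char_poly (quotient_matrix (dihedral_num_classes n) (dihedral_weight n) (dihedral_class_size n)
      (\<lambda>K. dihedral_weight n K K)) =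
    [: sqrt 2 * (4 * real n ^ 5 - 16 * real n ^ 4 + 22 * real n ^ 3 - 14 * real n ^ 2 + 4 * real n),
       15 * real n ^ 2 - 9 * real n ^ 3 - 10 * real n + 2,
       sqrt 2 * (3 * real n - real n ^ 2 - 2), 1 :]"
  (is "char_poly ?Q = ?cubic")
proof -
  define \<alpha> where "\<alpha> = sqrt ((2 * real n - 1) ^ 2 + (real n - 1) ^ 2)"
  define \<gamma> where "\<gamma> = sqrt ((2 * real n - 1) ^ 2 + 1)"
  define N where "N = real n"
  have \<alpha>: "\<alpha> * \<alpha> = (2 * N - 1) ^ 2 + (N - 1) ^ 2" and \<gamma>: "\<gamma> * \<gamma> = (2 * N - 1) ^ 2 + 1"
    unfolding \<alpha>_def \<gamma>_def N_def by (simp_all add: add_nonneg_nonneg)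
  have size: "real (dihedral_class_size n 0) = 1" "real (dihedral_class_size n 1) = real n - 1"
    "real (dihedral_class_size n 2) = real n" and classes: "dihedral_num_classes n = 3"
    using assms by (simp_all add: dihedral_class_size_def dihedral_num_classes_def of_nat_diff)
  have reflection_weights: "dihedral_weight n 0 2 = \<gamma>" "dihedral_weight n 2 0 = \<gamma>"
    "dihedral_weight n 1 2 = 0" "dihedral_weight n 2 1 = 0" "dihedral_weight n 2 2 = 0"
    using dihedral_weight_reflections[OF assms(2) order_refl] assms(1)
    by (simp_all add: \<gamma>_def)
  show ?thesis
  proof (rule poly_eqI_cofinite[of "{}"])
    fix x
    show "poly (char_poly ?Q) x = poly ?cubic x"
      unfolding classes quotient_matrix_def char_poly_mat3 size reflection_weights
        dihedral_weight_rotations[OF assms(2), folded \<alpha>_def]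
      by (simp flip: N_def) (use \<alpha> \<gamma> in Groebner_Basis.algebra)
  qed simp
qed

lemma dihedral_sombor_prefactor_even:
  assumes "even n" and "n \<ge> 3"
  shows "(\<Prod>K<dihedral_num_classes n. [: dihedral_weight n K K, 1 :] ^ (dihedral_class_size n K - 1)) =
    [: (2 * real n - 1) * sqrt 2, 1 :] * [: (real n - 1) * sqrt 2, 1 :] ^ (n - 3)
      * [: 3 * sqrt 2, 1 :] ^ (n div 2)"
proof -
  define f where "f K = [: dihedral_weight n K K, 1 :] ^ (dihedral_class_size n K - 1)" for K
  have "f 0 = [: (2 * real n - 1) * sqrt 2, 1 :]" and "f (Suc 0) = [: (real n - 1) * sqrt 2, 1 :] ^ (n - 3)"
    using assms dihedral_weight_rotations[OF assms(2)] by (simp_all add: f_def dihedral_class_size_def)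
  moreover have "f (Suc (Suc p)) = [: 3 * sqrt 2, 1 :]" for p
    using dihedral_weight_reflections(5)[OF assms(2), of "p + 2" "p + 2"] assms(1)
    by (simp add: f_def dihedral_class_size_def)
  moreover have "dihedral_num_classes n = Suc (Suc (n div 2))"
    using assms(1) by (simp add: dihedral_num_classes_def)
  ultimately show ?thesis
    unfolding f_def[symmetric] by (simp only: prod.lessThan_Suc_shift prod_constant card_lessThan mult.assoc)
qed

(* For even n the n/2 reflection classes of the quotient matrix are indistinguishable, so the
   quotient is block-constant again; its (2, 2) entry is moved into the diagonal correction. *)
definition dihedral_reduced_weight :: "nat \<Rightarrow> nat \<Rightarrow> nat \<Rightarrow> real" where
  "dihedral_reduced_weight n K L =
    (if K = 2 \<and> L = 2 then 0
     else dihedral_weight n K L * real (dihedral_class_size n L) - (if K = L then dihedral_weight n K K else 0))"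

lemma char_poly_dihedral_quotient_even_reduction:
  assumes "even n" and "n \<ge> 3"
  shows "char_poly (quotient_matrix (dihedral_num_classes n) (dihedral_weight n) (dihedral_class_size n)
      (\<lambda>K. dihedral_weight n K K)) =
    [: - 3 * sqrt 2, 1 :] ^ (n div 2 - 1) * char_poly (quotient_matrix 3 (dihedral_reduced_weight n)
      (\<lambda>K. if K = 2 then n div 2 else 1) (\<lambda>K. if K = 2 then - 3 * sqrt 2 else 0))"
  (is "char_poly ?Q = _ * char_poly (quotient_matrix 3 _ ?s ?w)")
proof -
  define h where "h = n div 2"
  have h: "h \<ge> 2" and classes: "dihedral_num_classes n = h + 2"
    using assms unfolding h_def by (auto simp: dihedral_num_classes_def)
  have "char_poly ?Q = (\<Prod>K<3. [: ?w K, 1 :] ^ (?s K - 1)) *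
      char_poly (quotient_matrix 3 (dihedral_reduced_weight n) ?s ?w)"
  proof (rule char_poly_equitable_partition[where cls = "\<lambda>i. min i 2"])
    show "?Q \<in> carrier_mat (h + 2) (h + 2)"
      by (simp add: quotient_matrix_def classes)
    show "card {i. i < h + 2 \<and> min i 2 = K} = ?s K" if "K < 3" for K
    proof -
      have "{i. i < h + 2 \<and> min i 2 = K} = (if K = 2 then {2..<h + 2} else {K})"
        using that h by (auto simp: min_def)
      then show ?thesis
        by (simp add: h_def)
    qed
    fix i j assume "i < h + 2" and "j < h + 2"
    then show "?Q $$ (i, j) = dihedral_reduced_weight n (min i 2) (min j 2) - (if i = j then ?w (min i 2) else 0)"
      using assms dihedral_weight_rotations[OF assms(2)] dihedral_weight_reflections[OF assms(2)]
      by (cases "i = 0"; cases "i = 1"; cases "j = 0"; cases "j = 1")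
        (auto simp: quotient_matrix_def classes dihedral_class_size_def dihedral_reduced_weight_def min_def)
  qed (use h in \<open>auto simp: h_def\<close>)
  moreover have "{..<3} = {0, 1, 2 :: nat}"
    by auto
  ultimately show ?thesis
    by (simp add: h_def)
qed

lemma dihedral_reduced_weight_values:
  assumes "even n" and "n \<ge> 3"
  shows "dihedral_reduced_weight n 0 0 = (2 * real n - 1) * sqrt 2"
    and "dihedral_reduced_weight n 0 1 = sqrt ((2 * real n - 1) ^ 2 + (real n - 1) ^ 2) * (real n - 2)"
    and "dihedral_reduced_weight n 0 2 = 2 * sqrt ((2 * real n - 1) ^ 2 + 9)"
    and "dihedral_reduced_weight n 1 0 = 2 * sqrt ((2 * real n - 1) ^ 2 + (real n - 1) ^ 2)"
    and "dihedral_reduced_weight n 1 1 = (real n - 1) * (real n - 3) * sqrt 2"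
    and "dihedral_reduced_weight n 1 2 = 0"
    and "dihedral_reduced_weight n 2 0 = 2 * sqrt ((2 * real n - 1) ^ 2 + 9)"
    and "dihedral_reduced_weight n 2 1 = 0"
    and "dihedral_reduced_weight n 2 2 = 0"
proof -
  have "(real n - 1) * sqrt 2 * (real n - 2) - (real n - 1) * sqrt 2 = (real n - 1) * (real n - 3) * sqrt 2"
    by (simp add: algebra_simps)
  then show "dihedral_reduced_weight n 0 0 = (2 * real n - 1) * sqrt 2"
    and "dihedral_reduced_weight n 0 1 = sqrt ((2 * real n - 1) ^ 2 + (real n - 1) ^ 2) * (real n - 2)"
    and "dihedral_reduced_weight n 0 2 = 2 * sqrt ((2 * real n - 1) ^ 2 + 9)"
    and "dihedral_reduced_weight n 1 0 = 2 * sqrt ((2 * real n - 1) ^ 2 + (real n - 1) ^ 2)"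
    and "dihedral_reduced_weight n 1 1 = (real n - 1) * (real n - 3) * sqrt 2"
    and "dihedral_reduced_weight n 1 2 = 0"
    and "dihedral_reduced_weight n 2 0 = 2 * sqrt ((2 * real n - 1) ^ 2 + 9)"
    and "dihedral_reduced_weight n 2 1 = 0"
    and "dihedral_reduced_weight n 2 2 = 0"
    using assms dihedral_weight_rotations[OF assms(2)] dihedral_weight_reflections[OF assms(2) order_refl]
    by (auto simp: dihedral_reduced_weight_def dihedral_class_size_def of_nat_diff mult.commute)
qed

lemma char_poly_dihedral_quotient_even:
  assumes "even n" and "n \<ge> 3"
  shows "char_poly (quotient_matrix (dihedral_num_classes n) (dihedral_weight n) (dihedral_class_size n)
      (\<lambda>K. dihedral_weight n K K)) =
    [: - (2 * real n - 1) * sqrt 2, 1 :] * [: - (real n - 1) * (real n - 3) * sqrt 2, 1 :]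
      * [: - 3 * sqrt 2, 1 :] ^ (n div 2)
    - Polynomial.smult (2 * (real n - 2) * (5 * real n ^ 2 - 6 * real n + 2)) ([: - 3 * sqrt 2, 1 :] ^ (n div 2))
    - Polynomial.smult (4 * real n * (2 * real n ^ 2 - 2 * real n + 5))
        ([: - (real n - 3) * (real n - 1) * sqrt 2, 1 :] * [: - 3 * sqrt 2, 1 :] ^ (n div 2 - 1))"
  (is "char_poly ?Q = ?target")
proof (rule poly_eqI_cofinite[of "{}"])
  fix x
  define N where "N = real n"
  define \<alpha> where "\<alpha> = sqrt ((2 * real n - 1) ^ 2 + (real n - 1) ^ 2)"
  define \<delta> where "\<delta> = sqrt ((2 * real n - 1) ^ 2 + 9)"
  define c where "c = 3 * sqrt 2"
  obtain m where m: "n div 2 = Suc m"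
    using assms by (cases "n div 2") auto
  \<comment> \<open>abstracted so that the Groebner basis method sees an atom instead of a symbolic power\<close>
  define P where "P = (x - c) ^ m"
  have "n = 2 * Suc m"
    using assms(1) m by presburger
  then have N: "N = 2 * (real m + 1)"
    by (simp add: N_def)
  have \<alpha>: "\<alpha> * \<alpha> = (2 * N - 1) ^ 2 + (N - 1) ^ 2" and \<delta>: "\<delta> * \<delta> = (2 * N - 1) ^ 2 + 9"
    unfolding \<alpha>_def \<delta>_def N_def by (simp_all add: add_nonneg_nonneg)
  show "poly (char_poly ?Q) x = poly ?target x"
    unfolding char_poly_dihedral_quotient_even_reduction[OF assms]
    unfolding quotient_matrix_def char_poly_mat3
      dihedral_reduced_weight_values[OF assms, folded \<alpha>_def \<delta>_def]
    by (simp add: m flip: N_def c_def P_def) (use \<alpha> \<delta> N in Groebner_Basis.algebra)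
qed simp

theorem corollary4p1:
  fixes n :: nat and vs :: "(int \<times> bool) list"
  assumes "n \<ge> 3"
    and "distinct vs" and "set vs = carrier (dihedral_group n)"
  shows
   "(odd n \<longrightarrow>
      char_poly (sombor_matrix (carrier (dihedral_group n)) (commuting_adj (dihedral_group n)) vs)
      = [: (real n - 1) * sqrt 2, 1 :] ^ (n - 2) * [: 0, 1 :] ^ (n - 1) *
        [: sqrt 2 * (4 * real n ^ 5 - 16 * real n ^ 4 + 22 * real n ^ 3 - 14 * real n ^ 2 + 4 * real n),
           15 * real n ^ 2 - 9 * real n ^ 3 - 10 * real n + 2,
           sqrt 2 * (3 * real n - real n ^ 2 - 2),
           1 :])
    \<and> (even n \<longrightarrow>
      char_poly (sombor_matrix (carrier (dihedral_group n)) (commuting_adj (dihedral_group n)) vs)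
      = [: (2 * real n - 1) * sqrt 2, 1 :] * [: (real n - 1) * sqrt 2, 1 :] ^ (n - 3)
        * [: 3 * sqrt 2, 1 :] ^ (n div 2) *
        ([: - (2 * real n - 1) * sqrt 2, 1 :] * [: - (real n - 1) * (real n - 3) * sqrt 2, 1 :]
           * [: - 3 * sqrt 2, 1 :] ^ (n div 2)
         - Polynomial.smult (2 * (real n - 2) * (5 * real n ^ 2 - 6 * real n + 2)) ([: - 3 * sqrt 2, 1 :] ^ (n div 2))
         - Polynomial.smult (4 * real n * (2 * real n ^ 2 - 2 * real n + 5))
             ([: - (real n - 3) * (real n - 1) * sqrt 2, 1 :] * [: - 3 * sqrt 2, 1 :] ^ (n div 2 - 1))))"
proof -
  note reduction = char_poly_sombor_matrix_dihedral_group[OF assms]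
  show ?thesis
    unfolding reduction
    using dihedral_sombor_prefactor_odd[OF _ assms(1)] char_poly_dihedral_quotient_odd[OF _ assms(1)]
      dihedral_sombor_prefactor_even[OF _ assms(1)] char_poly_dihedral_quotient_even[OF _ assms(1)]
    by (intro conjI impI) simp_all
qed

end
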